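(* Let $n,m,N$ be positive integers, $p_1,\ldots,p_N,q_1,\ldots,q_N,g_1,\ldots,g_m\in\mathbb{R}[\mathbf{x}]$ with $\mathbf{x}=(x_1,\ldots,x_n)$, $\mathbf{K}=\{\mathbf{x}\in\mathbb{R}^n\mid g_j(\mathbf{x})\ge0,\ j\in[m]\}$, and assume $\mathbf{K}$ is compact and $q_i>0$ on $\mathbf{K}$ for all $i\in[N]$. Let $\rho=\inf_{\mathbf{x}\in\mathbf{K}}\sum_{i=1}^Np_i(\mathbf{x})/q_i(\mathbf{x})$. With $\mathcal{A}_i$ as in the context, let \[ \rho^{\mathrm{s}}=\sup\Big\{c\ \Big|\ c\in\mathbb{R},\ h_i\in\mathbb{R}[\overline{\mathcal{A}_i}]\ (i=2,\ldots,N),\ \frac{p_1(\mathbf{x})}{q_1(\mathbf{x})}+\sum_{i=2}^Nh_i(\mathbf{x})\ge c\ \text{and}\ \frac{p_i(\mathbf{x})}{q_i(\mathbf{x})}\ge h_i(\mathbf{x})\ (i=2,\ldots,N)\ \text{for all }\mathbf{x}\in\mathbf{K}\Big\}. \] Then $\rho^{\mathrm{s}}=\rho$.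
   Context: $\operatorname{supp}(f)$ is the set of exponents of monomials with nonzero coefficient in $f$. For $i\in\{2,\ldots,N\}$, $\mathcal{A}_i=\operatorname{supp}(p_i)\cup\operatorname{supp}(q_i)\cup\bigcup_{j=1}^m\operatorname{supp}(g_j)$. For finite $\mathcal{A}\subseteq\mathbb{N}^n$, $\mathcal{R}(\mathcal{A})=\{\mathbf{r}\in\{0,1\}^n\mid \mathbf{r}^\intercal\boldsymbol{\alpha}\equiv0\ (\mathrm{mod}\ 2)\ \forall\boldsymbol{\alpha}\in\mathcal{A}\}$ and $\overline{\mathcal{A}}=\{\boldsymbol{\alpha}\in\mathbb{N}^n\mid\mathbf{r}^\intercal\boldsymbol{\alpha}\equiv0\ (\mathrm{mod}\ 2)\ \forall\mathbf{r}\in\mathcal{R}(\mathcal{A})\}$. $\mathbb{R}[\overline{\mathcal{A}}]$ is the set of polynomials whose support is contained in $\overline{\mathcal{A}}$. *)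

theory Defs
  imports "HOL-Analysis.Analysis" "HOL-Library.Poly_Mapping" "HOL-Library.Extended_Real"
begin

text \<open>Real polynomials in the variables x_i, i :: 'n (a finite type, so n = CARD('n)).\<close>
type_synonym 'n rpoly = "('n \<Rightarrow> nat) \<Rightarrow>\<^sub>0 real"

definition peval :: "('n::finite) rpoly \<Rightarrow> real ^ 'n \<Rightarrow> real" where
  "peval f x = (\<Sum>\<alpha>\<in>Poly_Mapping.keys f. Poly_Mapping.lookup f \<alpha> * (\<Prod>i\<in>UNIV. (x $ i) ^ \<alpha> i))"

definition supp :: "('n::finite) rpoly \<Rightarrow> ('n \<Rightarrow> nat) set" where
  "supp f = Poly_Mapping.keys f"

definition Rset :: "('n::finite \<Rightarrow> nat) set \<Rightarrow> ('n \<Rightarrow> nat) set" where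
  "Rset A = {r. (\<forall>i. r i \<in> {0,1}) \<and> (\<forall>\<alpha>\<in>A. even (\<Sum>i\<in>UNIV. r i * \<alpha> i))}"

definition Abar :: "('n::finite \<Rightarrow> nat) set \<Rightarrow> ('n \<Rightarrow> nat) set" where
  "Abar A = {\<alpha>. \<forall>r\<in>Rset A. even (\<Sum>i\<in>UNIV. r i * \<alpha> i)}"

end

theory Submission
  imports Defs
begin

(* Summing the constraints shows that every certified c is a lower bound, so rho^s <= rho.
   Conversely, for c < c' < rho it suffices to approximate each p_i/q_i (i >= 2) from below on K,
   uniformly within (c' - c)/N, by a polynomial supported in the closure of A_i.
   For r in R(A_i) the sign change x \<mapsto> ((-1)^r_k x_k)_k fixes every monomial with exponent
   in A_i, hence preserves K and p_i/q_i. Averaging a Stone-Weierstrass approximant over the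
   finite group R(A_i) of these sign changes therefore still approximates p_i/q_i, and it kills
   exactly the monomials x^alpha with alpha outside the closure of A_i: for those the character
   r \<mapsto> (-1)^(r.alpha) of R(A_i) is nontrivial, so its sum over the group vanishes. *)

definition monomial :: "('n::finite \<Rightarrow> nat) \<Rightarrow> real^'n \<Rightarrow> real" where
  "monomial \<alpha> x = (\<Prod>i\<in>UNIV. (x $ i) ^ \<alpha> i)"

lemma peval_eq_monomial_sum:
  "peval f x = (\<Sum>\<alpha>\<in>Poly_Mapping.keys f. Poly_Mapping.lookup f \<alpha> * monomial \<alpha> x)"
  by (simp add: peval_def monomial_def)

lemma peval_add: "peval (f + g) x = peval f x + peval g x"
  unfolding peval_eq_monomial_sum by (rule setsum_keys_plus_distrib) (simp_all add: distrib_right)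

lemma peval_zero: "peval 0 x = 0"
  by (simp add: peval_def)

lemma peval_sum: "peval (sum f I) x = (\<Sum>i\<in>I. peval (f i) x)"
  by (induction I rule: infinite_finite_induct) (simp_all add: peval_add peval_zero)

lemma peval_single: "peval (Poly_Mapping.single \<alpha> c) x = c * monomial \<alpha> x"
  by (simp add: peval_eq_monomial_sum)

lemma monomial_add: "monomial (\<lambda>i. \<alpha> i + \<beta> i) x = monomial \<alpha> x * monomial \<beta> x"
  by (simp add: monomial_def power_add prod.distrib)

lemma continuous_on_peval: "continuous_on S (peval f)"
  unfolding peval_def by (intro continuous_intros)

lemma peval_mult_exists: "\<exists>h. peval h = (\<lambda>x. peval f x * peval g x)"
proof
  let ?h = "\<Sum>(\<alpha>, \<beta>)\<in>Poly_Mapping.keys f \<times> Poly_Mapping.keys g.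
      Poly_Mapping.single (\<lambda>i. \<alpha> i + \<beta> i) (Poly_Mapping.lookup f \<alpha> * Poly_Mapping.lookup g \<beta>)"
  have "peval ?h x = peval f x * peval g x" for x
  proof -
    have "peval ?h x = (\<Sum>(\<alpha>, \<beta>)\<in>Poly_Mapping.keys f \<times> Poly_Mapping.keys g.
        (Poly_Mapping.lookup f \<alpha> * monomial \<alpha> x) * (Poly_Mapping.lookup g \<beta> * monomial \<beta> x))"
      by (simp add: peval_sum peval_single monomial_add split_def mult_ac)
    also have "\<dots> = peval f x * peval g x"
      by (simp add: peval_eq_monomial_sum sum_product sum.cartesian_product)
    finally show ?thesis .
  qed
  then show "peval ?h = (\<lambda>x. peval f x * peval g x)" ..
qed

lemma peval_linear_exists:
  fixes F :: "real^'n::finite \<Rightarrow> real"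
  assumes "linear F"
  shows "\<exists>h. peval h = F"
proof
  define e :: "'n \<Rightarrow> 'n \<Rightarrow> nat" where "e k = (\<lambda>j. if j = k then 1 else 0)" for k
  have monomial_e: "monomial (e k) x = x $ k" for k x
    unfolding monomial_def e_def by (subst prod.remove[of UNIV k]) auto
  have F_eq: "F x = (\<Sum>k\<in>UNIV. x $ k * F (axis k 1))" for x
  proof -
    have "F x = F (\<Sum>k\<in>UNIV. (x $ k) *\<^sub>R axis k 1)"
      using basis_expansion[of x] by (simp add: scalar_mult_eq_scaleR)
    also have "\<dots> = (\<Sum>k\<in>UNIV. x $ k * F (axis k 1))"
      using assms by (simp add: linear_sum linear_scale)
    finally show ?thesis .
  qed
  show "peval (\<Sum>k\<in>UNIV. Poly_Mapping.single (e k) (F (axis k 1))) = F"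
  proof
    fix x
    show "peval (\<Sum>k\<in>UNIV. Poly_Mapping.single (e k) (F (axis k 1))) x = F x"
      unfolding F_eq[of x] by (simp add: peval_sum peval_single monomial_e mult.commute)
  qed
qed

lemma real_polynomial_function_peval:
  fixes F :: "real^'n::finite \<Rightarrow> real"
  assumes "real_polynomial_function F"
  shows "\<exists>f. peval f = F"
  using assms
proof (induction rule: real_polynomial_function.induct)
  case (linear F)
  then show ?case by (simp add: bounded_linear.linear peval_linear_exists)
next
  case (const c)
  have "peval (Poly_Mapping.single (\<lambda>_. 0) c) = (\<lambda>x. c)"
    by (simp add: fun_eq_iff peval_single monomial_def)
  then show ?case by blast
next
  case (add F G)
  then obtain f g where "peval f = F" "peval g = G" by blast
  then have "peval (f + g) = (\<lambda>x. F x + G x)" by (simp add: fun_eq_iff peval_add)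
  then show ?case by blast
next
  case (mult F G)
  then show ?case using peval_mult_exists by blast
qed

definition sign_flip :: "('n::finite \<Rightarrow> nat) \<Rightarrow> real^'n \<Rightarrow> real^'n" where
  "sign_flip r x = (\<chi> i. (-1) ^ r i * x $ i)"

lemma monomial_sign_flip:
  "monomial \<alpha> (sign_flip r x) = (-1) ^ (\<Sum>i\<in>UNIV. r i * \<alpha> i) * monomial \<alpha> x"
  by (simp add: monomial_def sign_flip_def power_mult_distrib prod.distrib power_sum power_mult)

lemma peval_sign_flip:
  assumes "r \<in> Rset A" "supp f \<subseteq> A"
  shows "peval f (sign_flip r x) = peval f x"
proof -
  have "(-1::real) ^ (\<Sum>i\<in>UNIV. r i * \<alpha> i) = 1" if "\<alpha> \<in> Poly_Mapping.keys f" for \<alpha>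
    using assms that unfolding Rset_def supp_def by auto
  then show ?thesis
    unfolding peval_eq_monomial_sum monomial_sign_flip by (intro sum.cong) simp_all
qed

lemma finite_Rset: "finite (Rset A)"
proof (rule finite_subset)
  show "Rset A \<subseteq> PiE UNIV (\<lambda>_. {0, 1})"
    unfolding Rset_def PiE_UNIV_domain Pi_def by blast
qed (simp add: finite_PiE)

lemma zero_in_Rset: "(\<lambda>_. 0) \<in> Rset A"
  unfolding Rset_def by simp

definition parity_add :: "('n \<Rightarrow> nat) \<Rightarrow> ('n \<Rightarrow> nat) \<Rightarrow> 'n \<Rightarrow> nat" where
  "parity_add r s = (\<lambda>i. (r i + s i) mod 2)"

lemma even_sum_parity_add:
  "even (\<Sum>i\<in>I. parity_add r s i * \<alpha> i)
    \<longleftrightarrow> (even (\<Sum>i\<in>I. r i * \<alpha> i) \<longleftrightarrow> even (\<Sum>i\<in>I. s i * \<alpha> i))"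
proof -
  have "(\<Sum>i\<in>I. parity_add r s i * \<alpha> i) mod 2 = (\<Sum>i\<in>I. ((r i + s i) mod 2 * \<alpha> i) mod 2) mod 2"
    unfolding parity_add_def by (rule mod_sum_eq[symmetric])
  also have "\<dots> = (\<Sum>i\<in>I. ((r i + s i) * \<alpha> i) mod 2) mod 2"
    by (simp only: mod_mult_left_eq)
  also have "\<dots> = (\<Sum>i\<in>I. r i * \<alpha> i + s i * \<alpha> i) mod 2"
    by (simp only: mod_sum_eq distrib_right)
  finally have "even (\<Sum>i\<in>I. parity_add r s i * \<alpha> i)
      \<longleftrightarrow> even ((\<Sum>i\<in>I. r i * \<alpha> i) + (\<Sum>i\<in>I. s i * \<alpha> i))"
    unfolding even_iff_mod_2_eq_zero sum.distrib by simp
  then show ?thesis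
    by simp
qed

lemma parity_add_in_Rset:
  assumes "r \<in> Rset A" "s \<in> Rset A"
  shows "parity_add r s \<in> Rset A"
proof -
  have "parity_add r s i \<in> {0, 1}" for i
    by (simp add: parity_add_def mod2_eq_if)
  moreover have "even (\<Sum>i\<in>UNIV. parity_add r s i * \<alpha> i)" if "\<alpha> \<in> A" for \<alpha>
    using assms that unfolding Rset_def by (simp add: even_sum_parity_add)
  ultimately show ?thesis
    unfolding Rset_def by blast
qed

lemma parity_add_cancel:
  assumes "r \<in> Rset A" "s \<in> Rset A"
  shows "parity_add (parity_add r s) s = r"
proof
  fix i
  have "r i \<in> {0, 1}" "s i \<in> {0, 1}"
    using assms unfolding Rset_def by blast+
  then show "parity_add (parity_add r s) s i = r i"
    unfolding parity_add_def by auto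
qed

(* Translation by an s with odd r.alpha negates every term of the character sum. *)
lemma sum_Rset_sign_eq_0:
  assumes "\<alpha> \<notin> Abar A"
  shows "(\<Sum>r\<in>Rset A. (-1::real) ^ (\<Sum>i\<in>UNIV. r i * \<alpha> i)) = 0"
proof -
  obtain s where s: "s \<in> Rset A" "odd (\<Sum>i\<in>UNIV. s i * \<alpha> i)"
    using assms unfolding Abar_def by blast
  have "(\<Sum>r\<in>Rset A. (-1::real) ^ (\<Sum>i\<in>UNIV. r i * \<alpha> i))
      = (\<Sum>r\<in>Rset A. (-1) ^ (\<Sum>i\<in>UNIV. parity_add r s i * \<alpha> i))"
    by (rule sum.reindex_bij_witness[of _ "\<lambda>r. parity_add r s" "\<lambda>r. parity_add r s"])
      (simp_all add: s parity_add_in_Rset parity_add_cancel)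
  also have "\<dots> = (\<Sum>r\<in>Rset A. - ((-1) ^ (\<Sum>i\<in>UNIV. r i * \<alpha> i)))"
    using s(2) by (intro sum.cong) (simp_all add: minus_one_power_iff even_sum_parity_add)
  also have "\<dots> = - (\<Sum>r\<in>Rset A. (-1) ^ (\<Sum>i\<in>UNIV. r i * \<alpha> i))"
    by (rule sum_negf)
  finally show ?thesis by simp
qed

definition restrict_keys :: "('a \<Rightarrow>\<^sub>0 'b::comm_monoid_add) \<Rightarrow> 'a set \<Rightarrow> 'a \<Rightarrow>\<^sub>0 'b" where
  "restrict_keys f S = (\<Sum>\<alpha>\<in>Poly_Mapping.keys f \<inter> S. Poly_Mapping.single \<alpha> (Poly_Mapping.lookup f \<alpha>))"

lemma keys_restrict_keys: "Poly_Mapping.keys (restrict_keys f S) \<subseteq> S"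
  unfolding restrict_keys_def by (rule order.trans[OF keys_sum]) auto

lemma sum_peval_sign_flip:
  "(\<Sum>r\<in>Rset A. peval f (sign_flip r x)) = real (card (Rset A)) * peval (restrict_keys f (Abar A)) x"
proof -
  have sign_sum: "(\<Sum>r\<in>Rset A. (-1::real) ^ (\<Sum>i\<in>UNIV. r i * \<alpha> i))
      = (if \<alpha> \<in> Abar A then real (card (Rset A)) else 0)" for \<alpha>
    by (auto simp: sum_Rset_sign_eq_0 Abar_def)
  have "(\<Sum>r\<in>Rset A. peval f (sign_flip r x)) = (\<Sum>\<alpha>\<in>Poly_Mapping.keys f.
      Poly_Mapping.lookup f \<alpha> * monomial \<alpha> x * (\<Sum>r\<in>Rset A. (-1) ^ (\<Sum>i\<in>UNIV. r i * \<alpha> i)))"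
    unfolding peval_eq_monomial_sum monomial_sign_flip
    by (subst sum.swap) (simp add: sum_distrib_left mult_ac)
  also have "\<dots> = (\<Sum>\<alpha>\<in>Poly_Mapping.keys f. real (card (Rset A)) *
      (if \<alpha> \<in> Abar A then Poly_Mapping.lookup f \<alpha> * monomial \<alpha> x else 0))"
    by (intro sum.cong) (simp_all add: sign_sum)
  also have "\<dots> = real (card (Rset A)) * (\<Sum>\<alpha>\<in>Poly_Mapping.keys f \<inter> Abar A.
      Poly_Mapping.lookup f \<alpha> * monomial \<alpha> x)"
    by (simp add: sum.inter_restrict sum_distrib_left)
  finally show ?thesis
    by (simp add: restrict_keys_def peval_sum peval_single)
qed

lemma invariant_approximation:
  fixes K :: "(real^'n::finite) set" and F :: "real^'n \<Rightarrow> real"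
  assumes "compact K" "continuous_on K F" "e > 0"
    and K_inv: "\<And>r x. r \<in> Rset A \<Longrightarrow> x \<in> K \<Longrightarrow> sign_flip r x \<in> K"
    and F_inv: "\<And>r x. r \<in> Rset A \<Longrightarrow> x \<in> K \<Longrightarrow> F (sign_flip r x) = F x"
  shows "\<exists>h. supp h \<subseteq> Abar A \<and> (\<forall>x\<in>K. \<bar>peval h x - F x\<bar> < e)"
proof -
  obtain P where "polynomial_function P" and P: "\<forall>x\<in>K. \<bar>F x - P x\<bar> < e"
    using Stone_Weierstrass_polynomial_function[OF assms(1-3)] by auto
  then obtain f where f: "peval f = P"
    using real_polynomial_function_peval real_polynomial_function_eq by blast
  define h where "h = restrict_keys f (Abar A)"
  have Rset_ne: "Rset A \<noteq> {}"
    using zero_in_Rset by blast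
  then have card_pos: "card (Rset A) > 0"
    using finite_Rset card_gt_0_iff by blast
  have "\<bar>peval h x - F x\<bar> < e" if "x \<in> K" for x
  proof -
    have "(\<Sum>r\<in>Rset A. P (sign_flip r x)) = real (card (Rset A)) * peval h x"
      using sum_peval_sign_flip[of f x A] by (simp add: f h_def)
    moreover have "(\<Sum>r\<in>Rset A. F (sign_flip r x)) = real (card (Rset A)) * F x"
      using F_inv \<open>x \<in> K\<close> by simp
    ultimately have "real (card (Rset A)) * \<bar>peval h x - F x\<bar>
        = \<bar>\<Sum>r\<in>Rset A. P (sign_flip r x) - F (sign_flip r x)\<bar>"
      by (simp add: sum_subtractf abs_mult flip: right_diff_distrib)
    also have "\<dots> \<le> (\<Sum>r\<in>Rset A. \<bar>P (sign_flip r x) - F (sign_flip r x)\<bar>)"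
      by (rule sum_abs)
    also have "\<dots> < (\<Sum>r\<in>Rset A. e)"
      using K_inv P \<open>x \<in> K\<close>
      by (intro sum_strict_mono[OF finite_Rset Rset_ne]) (simp add: abs_minus_commute)
    finally show ?thesis
      using card_pos by simp
  qed
  moreover have "supp h \<subseteq> Abar A"
    by (simp add: h_def supp_def keys_restrict_keys)
  ultimately show ?thesis by blast
qed

lemma invariant_approximation_from_below:
  fixes K :: "(real^'n::finite) set" and F :: "real^'n \<Rightarrow> real"
  assumes "compact K" "continuous_on K F" "e > 0"
    and "\<And>r x. r \<in> Rset A \<Longrightarrow> x \<in> K \<Longrightarrow> sign_flip r x \<in> K"
    and "\<And>r x. r \<in> Rset A \<Longrightarrow> x \<in> K \<Longrightarrow> F (sign_flip r x) = F x"
  shows "\<exists>h. supp h \<subseteq> Abar A \<and> (\<forall>x\<in>K. F x - e \<le> peval h x \<and> peval h x \<le> F x)"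
proof -
  have "\<exists>h. supp h \<subseteq> Abar A \<and> (\<forall>x\<in>K. \<bar>peval h x - (F x - e / 2)\<bar> < e / 2)"
    by (rule invariant_approximation) (use assms in \<open>auto intro: continuous_intros\<close>)
  then obtain h where "supp h \<subseteq> Abar A"
    and close: "\<forall>x\<in>K. \<bar>peval h x - (F x - e / 2)\<bar> < e / 2"
    by blast
  moreover have "F x - e \<le> peval h x \<and> peval h x \<le> F x" if "x \<in> K" for x
    using close[rule_format, OF that] unfolding abs_less_iff by linarith
  ultimately show ?thesis
    by blast
qed

(* The feasible set of rho^s, abstracted over the certificates h_i, their admissibility P i
   (support in the closure of A_i) and their evaluation ev. *)
definition certified_lower_bounds ::
    "nat \<Rightarrow> 'a set \<Rightarrow> (nat \<Rightarrow> 'a \<Rightarrow> real) \<Rightarrow> (nat \<Rightarrow> 'h \<Rightarrow> bool) \<Rightarrow> ('h \<Rightarrow> 'a \<Rightarrow> real) \<Rightarrow> real set"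
  where "certified_lower_bounds N K F P ev = {c. \<exists>h.
    (\<forall>i\<in>{2..N}. P i (h i)) \<and>
    (\<forall>x\<in>K. F 1 x + (\<Sum>i=2..N. ev (h i) x) \<ge> c) \<and>
    (\<forall>i\<in>{2..N}. \<forall>x\<in>K. F i x \<ge> ev (h i) x)}"

lemma sum_atLeast1_split: "1 \<le> (N::nat) \<Longrightarrow> (\<Sum>i=1..N. f i) = f 1 + (\<Sum>i=2..N. f i)"
  by (simp add: sum.atLeast_Suc_atMost numeral_2_eq_2)

lemma certified_lower_bound_le:
  assumes "1 \<le> N" "c \<in> certified_lower_bounds N K F P ev" "x \<in> K"
  shows "c \<le> (\<Sum>i=1..N. F i x)"
proof -
  obtain h where "c \<le> F 1 x + (\<Sum>i=2..N. ev (h i) x)" and "\<forall>i\<in>{2..N}. ev (h i) x \<le> F i x"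
    using assms(2,3) unfolding certified_lower_bounds_def by blast
  moreover from this(2) have "(\<Sum>i=2..N. ev (h i) x) \<le> (\<Sum>i=2..N. F i x)"
    by (intro sum_mono) simp
  ultimately show ?thesis
    using sum_atLeast1_split[OF assms(1), of "\<lambda>i. F i x"] by linarith
qed

lemma certified_lower_bound_of_margin:
  assumes "1 \<le> N"
    and approx: "\<And>i e. i \<in> {2..N} \<Longrightarrow> e > 0 \<Longrightarrow>
      \<exists>h. P i h \<and> (\<forall>x\<in>K. F i x - e \<le> ev h x \<and> ev h x \<le> F i x)"
    and "c < c'" and margin: "\<forall>x\<in>K. c' \<le> (\<Sum>i=1..N. F i x)"
  shows "c \<in> certified_lower_bounds N K F P ev"
proof -
  define e where "e = (c' - c) / N"
  have "e > 0"
    using assms(1,3) by (simp add: e_def)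
  then have "\<forall>i\<in>{2..N}. \<exists>h. P i h \<and> (\<forall>x\<in>K. F i x - e \<le> ev h x \<and> ev h x \<le> F i x)"
    using approx by blast
  from bchoice[OF this] obtain H where H: "\<forall>i\<in>{2..N}. P i (H i) \<and>
      (\<forall>x\<in>K. F i x - e \<le> ev (H i) x \<and> ev (H i) x \<le> F i x)"
    by blast
  have "c \<le> F 1 x + (\<Sum>i=2..N. ev (H i) x)" if "x \<in> K" for x
  proof -
    have "(\<Sum>i=2..N. F i x - e) \<le> (\<Sum>i=2..N. ev (H i) x)"
      using H that by (intro sum_mono) auto
    moreover have "real (N - 1) * e \<le> c' - c"
      using assms(1,3) by (simp add: e_def of_nat_diff field_simps)
    ultimately show ?thesis
      using margin[rule_format, OF that] sum_atLeast1_split[OF assms(1), of "\<lambda>i. F i x"]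
      by (simp add: sum_subtractf)
  qed
  with H show ?thesis
    unfolding certified_lower_bounds_def by blast
qed

theorem SUP_certified_lower_bounds_eq_INF:
  fixes F :: "nat \<Rightarrow> 'a \<Rightarrow> real"
  assumes "1 \<le> N"
    and "\<And>i e. i \<in> {2..N} \<Longrightarrow> e > 0 \<Longrightarrow>
      \<exists>h. P i h \<and> (\<forall>x\<in>K. F i x - e \<le> ev h x \<and> ev h x \<le> F i x)"
  shows "(SUP c \<in> certified_lower_bounds N K F P ev. ereal c) = (INF x\<in>K. ereal (\<Sum>i=1..N. F i x))"
proof (rule antisym)
  show "(SUP c \<in> certified_lower_bounds N K F P ev. ereal c) \<le> (INF x\<in>K. ereal (\<Sum>i=1..N. F i x))"
    using certified_lower_bound_le[OF assms(1)] by (auto intro!: SUP_least INF_greatest)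
next
  show "(INF x\<in>K. ereal (\<Sum>i=1..N. F i x)) \<le> (SUP c \<in> certified_lower_bounds N K F P ev. ereal c)"
  proof (rule dense_le)
    fix y
    assume "y < (INF x\<in>K. ereal (\<Sum>i=1..N. F i x))"
    then obtain c' where "y < ereal c'" and "ereal c' < (INF x\<in>K. ereal (\<Sum>i=1..N. F i x))"
      using ereal_dense2 by blast
    moreover from this(1) obtain c where "y < ereal c" and "c < c'"
      using ereal_dense2 by force
    ultimately have "c \<in> certified_lower_bounds N K F P ev"
      using assms by (intro certified_lower_bound_of_margin)
        (auto dest: order.strict_trans2[OF _ INF_lower] simp: less_imp_le)
    then show "y \<le> (SUP c \<in> certified_lower_bounds N K F P ev. ereal c)"
      using \<open>y < ereal c\<close> by (meson SUP_upper less_imp_le order_trans)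
  qed
qed

theorem theorem4p3:
  fixes N m :: nat
    and p q :: "nat \<Rightarrow> ('n::finite) rpoly"
    and g :: "nat \<Rightarrow> 'n rpoly"
    and K :: "(real ^ 'n) set"
    and A :: "nat \<Rightarrow> ('n \<Rightarrow> nat) set"
  assumes "N \<ge> 1" and "m \<ge> 1"
    and K_def: "K = {x. \<forall>j\<in>{1..m}. peval (g j) x \<ge> 0}"
    and "compact K"
    and qpos: "\<forall>i\<in>{1..N}. \<forall>x\<in>K. peval (q i) x > 0"
    and A_def: "\<forall>i\<in>{2..N}. A i = supp (p i) \<union> supp (q i) \<union> (\<Union>j\<in>{1..m}. supp (g j))"
  shows "(SUP c \<in> {c :: real. \<exists>h :: nat \<Rightarrow> 'n rpoly.
              (\<forall>i\<in>{2..N}. supp (h i) \<subseteq> Abar (A i)) \<and>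
              (\<forall>x\<in>K. peval (p 1) x / peval (q 1) x + (\<Sum>i=2..N. peval (h i) x) \<ge> c) \<and>
              (\<forall>i\<in>{2..N}. \<forall>x\<in>K. peval (p i) x / peval (q i) x \<ge> peval (h i) x)}. ereal c)
         = (INF x \<in> K. ereal (\<Sum>i=1..N. peval (p i) x / peval (q i) x))"
proof -
  define F where "F i x = peval (p i) x / peval (q i) x" for i x
  have "\<exists>h. supp h \<subseteq> Abar (A i) \<and> (\<forall>x\<in>K. F i x - e \<le> peval h x \<and> peval h x \<le> F i x)"
    if i: "i \<in> {2..N}" and "e > 0" for i e
  proof (rule invariant_approximation_from_below[OF \<open>compact K\<close> _ \<open>e > 0\<close>])
    have "i \<in> {1..N}"
      using i by simp
    then have "\<forall>x\<in>K. peval (q i) x \<noteq> 0"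
      using qpos by fastforce
    then show "continuous_on K (F i)"
      unfolding F_def by (intro continuous_on_divide continuous_on_peval)
    have supp_le: "supp (p i) \<subseteq> A i" "supp (q i) \<subseteq> A i" "\<forall>j\<in>{1..m}. supp (g j) \<subseteq> A i"
      using A_def i by auto
    fix r x
    assume "r \<in> Rset (A i)" and "x \<in> K"
    with supp_le show "sign_flip r x \<in> K" and "F i (sign_flip r x) = F i x"
      unfolding K_def F_def by (simp_all add: peval_sign_flip)
  qed
  with \<open>N \<ge> 1\<close> have "(SUP c \<in> certified_lower_bounds N K F (\<lambda>i h. supp h \<subseteq> Abar (A i)) peval. ereal c)
      = (INF x\<in>K. ereal (\<Sum>i=1..N. F i x))"
    by (rule SUP_certified_lower_bounds_eq_INF)
  then show ?thesis
    by (simp add: certified_lower_bounds_def F_def)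
qed

end
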